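(* Let $G$ and $H$ be graphs on the same finite vertex set $V$. If $\mathcal R_0(G)=\mathcal R_0(H)$, then $G=H$.
   Context: A graph means a finite simple graph in which loops are allowed, with adjacency matrix $A$ over $\mathbf F_2$ ($A_{vv}=1$ iff $v$ has a loop). Let $\mathcal V$ be the $\mathbf F_2$-vector space with basis $V$ and $\mathcal E(x,y)=x^TAy$; for $W\subseteq V$, $\langle W\rangle$ is its span and $\langle W\rangle^{\perp\mathcal E}=\{x:\mathcal E(x,w)=0\ \forall w\in\langle W\rangle\}$. $W$ is reducible in $G$ if $\langle W\rangle+\langle W\rangle^{\perp\mathcal E}=\mathcal V$. The nullity of $W$ in $G$ is $|W|$ minus the $\mathbf F_2$-rank of the principal submatrix $A_{W,W}$. The pivotal poset $\mathcal R_0(G)$ is the collection of subsets $W\subseteq V$ that are reducible in $G$ and have nullity $0$ (equivalently, the subsets $W$ with $A_{W,W}$ invertible over $\mathbf F_2$; the empty set is included). *)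

theory Defs
  imports Main
begin

text \<open>A graph on a finite vertex set V (loops allowed) is a symmetric relation E on V;
  E v v means v carries a loop. The adjacency matrix over GF(2) has entry 1 at (u,v) iff E u v.
  Vectors of the GF(2)-space with basis V are identified with subsets of V
  (their supports); vector addition is symmetric difference.\<close>

definition is_graph :: "'a set \<Rightarrow> ('a \<Rightarrow> 'a \<Rightarrow> bool) \<Rightarrow> bool" where
  "is_graph V E \<longleftrightarrow> finite V \<and> (\<forall>u v. E u v \<longrightarrow> u \<in> V \<and> v \<in> V) \<and> (\<forall>u v. E u v = E v u)"

definition vadd :: "'a set \<Rightarrow> 'a set \<Rightarrow> 'a set" where
  "vadd x y = (x - y) \<union> (y - x)"

text \<open>The bilinear form x^T A y over GF(2); True represents 1.\<close>
definition bform :: "('a \<Rightarrow> 'a \<Rightarrow> bool) \<Rightarrow> 'a set \<Rightarrow> 'a set \<Rightarrow> bool" where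
  "bform E x y \<longleftrightarrow> odd (card {(u, v). u \<in> x \<and> v \<in> y \<and> E u v})"

text \<open>Span of a set W of basis vectors: all GF(2)-sums of elements of W, i.e. all subsets of W.\<close>
definition fspan :: "'a set \<Rightarrow> 'a set set" where
  "fspan W = {x. x \<subseteq> W}"

definition perpE :: "'a set \<Rightarrow> ('a \<Rightarrow> 'a \<Rightarrow> bool) \<Rightarrow> 'a set \<Rightarrow> 'a set set" where
  "perpE V E W = {x. x \<subseteq> V \<and> (\<forall>w \<in> fspan W. \<not> bform E x w)}"

definition reducible :: "'a set \<Rightarrow> ('a \<Rightarrow> 'a \<Rightarrow> bool) \<Rightarrow> 'a set \<Rightarrow> bool" where
  "reducible V E W \<longleftrightarrow> (\<forall>z. z \<subseteq> V \<longrightarrow> (\<exists>a \<in> fspan W. \<exists>b \<in> perpE V E W. z = vadd a b))"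

text \<open>Sum over GF(2) of the rows indexed by T of the principal submatrix A_{W,W}.\<close>
definition rowsum :: "('a \<Rightarrow> 'a \<Rightarrow> bool) \<Rightarrow> 'a set \<Rightarrow> 'a set \<Rightarrow> 'a set" where
  "rowsum E W T = {w \<in> W. odd (card {u \<in> T. E u w})}"

definition rows_indep :: "('a \<Rightarrow> 'a \<Rightarrow> bool) \<Rightarrow> 'a set \<Rightarrow> 'a set \<Rightarrow> bool" where
  "rows_indep E W S \<longleftrightarrow> (\<forall>T \<subseteq> S. T \<noteq> {} \<longrightarrow> rowsum E W T \<noteq> {})"

text \<open>GF(2)-rank of A_{W,W}: maximal number of linearly independent rows.\<close>
definition sub_rank :: "('a \<Rightarrow> 'a \<Rightarrow> bool) \<Rightarrow> 'a set \<Rightarrow> nat" where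
  "sub_rank E W = Max {card S | S. S \<subseteq> W \<and> rows_indep E W S}"

definition nullity :: "('a \<Rightarrow> 'a \<Rightarrow> bool) \<Rightarrow> 'a set \<Rightarrow> nat" where
  "nullity E W = card W - sub_rank E W"

definition pivotal_poset :: "'a set \<Rightarrow> ('a \<Rightarrow> 'a \<Rightarrow> bool) \<Rightarrow> 'a set set" where
  "pivotal_poset V E = {W. W \<subseteq> V \<and> reducible V E W \<and> nullity E W = 0}"

end

theory Submission
  imports Defs
begin

(* A graph is determined by its 1x1 and 2x2 principal submatrices:
   the loop at v is the entry A_vv, and for u \<noteq> v the entry A_uv is determined by
   the loops together with det A_{uv,uv} = A_uu A_vv + A_uv (over GF(2), A symmetric).
   Nonsingularity of these submatrices can be read off R_0, because of the general fact
   that a nonsingular principal submatrix A_{W,W} makes W reducible: the linear map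
   a |-> (row sum of a restricted to W) is injective on subsets of W, hence bijective,
   so every z can be corrected by some a in <W> to become E-orthogonal to W. *)

lemma odd_card_vadd:
  assumes "finite A" "finite B"
  shows "odd (card (vadd A B)) \<longleftrightarrow> odd (card A) \<noteq> odd (card B)"
proof -
  have sum: "card (vadd A B) = card (A - B) + card (B - A)"
    unfolding vadd_def using assms by (intro card_Un_disjoint) auto
  have A: "card A = card (A - B) + card (A \<inter> B)"
    using card_Int_Diff[OF assms(1), of B] by simp
  have B: "card B = card (B - A) + card (A \<inter> B)"
    using card_Int_Diff[OF assms(2), of A] by (simp add: Int_commute)
  show ?thesis using sum A B by presburger
qed

lemma vadd_Collect: "{u \<in> vadd S T. P u} = vadd {u \<in> S. P u} {u \<in> T. P u}"
  unfolding vadd_def by auto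

lemma insert_as_vadd: "a \<notin> y \<Longrightarrow> insert a y = vadd {a} y"
  unfolding vadd_def by auto

lemma bform_vadd_right:
  assumes "finite x" "finite y" "finite w"
  shows "bform E x (vadd y w) \<longleftrightarrow> bform E x y \<noteq> bform E x w"
proof -
  let ?P = "\<lambda>y. {(u, v). u \<in> x \<and> v \<in> y \<and> E u v}"
  have fin: "finite (?P y')" if "finite y'" for y'
    by (rule finite_subset[of _ "x \<times> y'"]) (use assms(1) that in auto)
  have split: "?P (vadd y w) = vadd (?P y) (?P w)"
    unfolding vadd_def by auto
  show ?thesis
    unfolding bform_def split by (rule odd_card_vadd[OF fin[OF assms(2)] fin[OF assms(3)]])
qed

lemma bform_singleton_right: "bform E x {w} \<longleftrightarrow> odd (card {u \<in> x. E u w})"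
proof -
  have "{(u, v). u \<in> x \<and> v \<in> {w} \<and> E u v} = (\<lambda>u. (u, w)) ` {u \<in> x. E u w}"
    by auto
  moreover have "inj_on (\<lambda>u. (u, w)) {u \<in> x. E u w}"
    by (rule inj_onI) simp
  ultimately show ?thesis
    unfolding bform_def by (simp add: card_image)
qed

lemma bform_vanishes_on_span:
  assumes "finite x" "finite y" "y \<subseteq> W" and orth: "\<forall>w \<in> W. \<not> bform E x {w}"
  shows "\<not> bform E x y"
  using assms(2,3)
proof (induction y rule: finite_induct)
  case empty
  show ?case unfolding bform_def by simp
next
  case (insert a y)
  have "bform E x (insert a y) \<longleftrightarrow> bform E x {a} \<noteq> bform E x y"
    unfolding insert_as_vadd[OF \<open>a \<notin> y\<close>]
    using \<open>finite x\<close> \<open>finite y\<close> by (intro bform_vadd_right) auto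
  then show ?case using orth insert by auto
qed

lemma rowsum_vadd:
  assumes "finite S" "finite T"
  shows "rowsum E W (vadd S T) = vadd (rowsum E W S) (rowsum E W T)"
proof -
  have parity: "odd (card {u \<in> vadd S T. E u w}) \<longleftrightarrow>
      odd (card {u \<in> S. E u w}) \<noteq> odd (card {u \<in> T. E u w})" for w
    unfolding vadd_Collect using assms by (intro odd_card_vadd) auto
  show ?thesis
    unfolding rowsum_def parity by (auto simp: vadd_def)
qed

lemma rowsum_subset: "rowsum E W T \<subseteq> W"
  unfolding rowsum_def by auto

lemma rowsum_surjective:
  assumes "finite W" and indep: "rows_indep E W W" and "t \<subseteq> W"
  shows "\<exists>a \<subseteq> W. rowsum E W a = t"
proof -
  have inj: "inj_on (rowsum E W) (Pow W)"
  proof (rule inj_onI)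
    fix S T assume S: "S \<in> Pow W" and T: "T \<in> Pow W" and eq: "rowsum E W S = rowsum E W T"
    have fin: "finite S" "finite T"
      using S T finite_subset \<open>finite W\<close> by (metis PowD)+
    have "rowsum E W (vadd S T) = vadd (rowsum E W S) (rowsum E W T)"
      by (rule rowsum_vadd[OF fin])
    also have "\<dots> = {}"
      using eq by (simp add: vadd_def)
    finally have "rowsum E W (vadd S T) = {}" .
    moreover have "vadd S T \<subseteq> W" using S T unfolding vadd_def by auto
    ultimately have "vadd S T = {}" using indep unfolding rows_indep_def by blast
    then show "S = T" unfolding vadd_def by auto
  qed
  have onto: "rowsum E W ` Pow W = Pow W"
  proof (rule card_subset_eq)
    show "finite (Pow W)" using \<open>finite W\<close> by simp
    show "rowsum E W ` Pow W \<subseteq> Pow W" by (simp add: image_subset_iff rowsum_subset)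
    show "card (rowsum E W ` Pow W) = card (Pow W)" using card_image[OF inj] .
  qed
  have "t \<in> rowsum E W ` Pow W" using \<open>t \<subseteq> W\<close> onto by simp
  then obtain a where "a \<in> Pow W" and "rowsum E W a = t" by (rule imageE) simp
  then show ?thesis by blast
qed

lemma nonsingular_reducible:
  assumes "finite V" "W \<subseteq> V" and indep: "rows_indep E W W"
  shows "reducible V E W"
  unfolding reducible_def
proof (intro allI impI)
  fix z assume "z \<subseteq> V"
  have finW: "finite W" and finz: "finite z"
    using assms(1,2) \<open>z \<subseteq> V\<close> by (simp_all add: finite_subset)
  obtain a where "a \<subseteq> W" and a: "rowsum E W a = rowsum E W z"
    using rowsum_surjective[OF finW indep rowsum_subset] by blast
  define b where "b = vadd z a"
  have finA: "finite a" using finW \<open>a \<subseteq> W\<close> by (simp add: finite_subset)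
  have finb: "finite b" unfolding b_def vadd_def using finz finA by simp
  have "rowsum E W b = vadd (rowsum E W z) (rowsum E W a)"
    unfolding b_def by (rule rowsum_vadd[OF finz finA])
  also have "\<dots> = {}"
    using a by (simp add: vadd_def)
  finally have "rowsum E W b = {}" .
  then have orth: "\<forall>w \<in> W. \<not> bform E b {w}"
    unfolding rowsum_def bform_singleton_right by blast
  have "b \<subseteq> V"
    unfolding b_def vadd_def using \<open>z \<subseteq> V\<close> \<open>a \<subseteq> W\<close> assms(2) by auto
  moreover have "\<not> bform E b y" if "y \<subseteq> W" for y
    using bform_vanishes_on_span[OF finb _ that orth] finite_subset[OF that finW] by blast
  ultimately have "b \<in> perpE V E W"
    unfolding perpE_def fspan_def by blast
  moreover have "a \<in> fspan W" using \<open>a \<subseteq> W\<close> unfolding fspan_def by simp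
  moreover have "z = vadd a b" unfolding b_def vadd_def by auto
  ultimately show "\<exists>a \<in> fspan W. \<exists>b \<in> perpE V E W. z = vadd a b" by blast
qed

lemma nullity_zero_iff:
  assumes "finite W"
  shows "nullity E W = 0 \<longleftrightarrow> rows_indep E W W"
proof -
  let ?S = "{card S | S. S \<subseteq> W \<and> rows_indep E W S}"
  have fin: "finite ?S"
    by (rule finite_subset[of _ "card ` Pow W"]) (use assms in auto)
  have zero: "0 \<in> ?S" unfolding rows_indep_def by force
  show ?thesis
  proof
    assume "nullity E W = 0"
    then have "card W \<le> Max ?S" unfolding nullity_def sub_rank_def by simp
    moreover have "Max ?S \<in> ?S" using fin zero by (intro Max_in) auto
    ultimately obtain S where "S \<subseteq> W" "rows_indep E W S" "card W \<le> card S" by auto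
    then have "S = W" using assms card_subset_eq by (metis antisym card_mono)
    then show "rows_indep E W W" using \<open>rows_indep E W S\<close> by simp
  next
    assume "rows_indep E W W"
    then have "card W \<le> Max ?S" using fin by (intro Max_ge) auto
    then show "nullity E W = 0" unfolding nullity_def sub_rank_def by simp
  qed
qed

lemma pivotal_poset_nonsingular:
  assumes "finite V"
  shows "pivotal_poset V E = {W. W \<subseteq> V \<and> rows_indep E W W}"
  using nonsingular_reducible[OF assms] nullity_zero_iff finite_subset[OF _ assms]
  unfolding pivotal_poset_def by blast

lemma rows_indep_singleton: "rows_indep E {v} {v} \<longleftrightarrow> E v v"
proof -
  have "{u \<in> {v}. E u v} = (if E v v then {v} else {})" by auto
  then have "rowsum E {v} {v} = (if E v v then {v} else {})"
    unfolding rowsum_def by auto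
  moreover have "rows_indep E {v} {v} \<longleftrightarrow> rowsum E {v} {v} \<noteq> {}"
    unfolding rows_indep_def by (auto dest: subset_singletonD)
  ultimately show ?thesis by simp
qed

text \<open>A symmetric 2x2 principal submatrix is nonsingular iff its determinant
  A_uu A_vv + A_uv is nonzero over GF(2).\<close>
lemma rows_indep_pair:
  assumes "u \<noteq> v" and sym: "E v u = E u v"
  shows "rows_indep E {u, v} {u, v} \<longleftrightarrow> E u v \<noteq> (E u u \<and> E v v)"
proof -
  have one: "rowsum E {u, v} {x} = {w \<in> {u, v}. E x w}" for x
  proof -
    have "{y \<in> {x}. E y w} = (if E x w then {x} else {})" for w by auto
    then show ?thesis unfolding rowsum_def by auto
  qed
  have both: "rowsum E {u, v} {u, v} = {w \<in> {u, v}. E u w \<noteq> E v w}"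
  proof -
    have "{y \<in> {u, v}. E y w} = (if E u w then {u} else {}) \<union> (if E v w then {v} else {})" for w
      by auto
    then show ?thesis unfolding rowsum_def using \<open>u \<noteq> v\<close> by auto
  qed
  have subsets: "T \<subseteq> {u, v} \<Longrightarrow> T \<noteq> {} \<Longrightarrow> T = {u} \<or> T = {v} \<or> T = {u, v}" for T
    by auto
  have "rows_indep E {u, v} {u, v} \<longleftrightarrow>
      rowsum E {u, v} {u} \<noteq> {} \<and> rowsum E {u, v} {v} \<noteq> {} \<and> rowsum E {u, v} {u, v} \<noteq> {}"
    unfolding rows_indep_def using subsets by (metis empty_not_insert insert_subset subset_insertI subset_refl)
  also have "\<dots> \<longleftrightarrow> E u v \<noteq> (E u u \<and> E v v)"
    unfolding one both using sym by auto
  finally show ?thesis .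
qed

theorem mainTheorem7:
  fixes V :: "'a set" and G H :: "'a \<Rightarrow> 'a \<Rightarrow> bool"
  assumes "is_graph V G" and "is_graph V H"
    and "pivotal_poset V G = pivotal_poset V H"
  shows "G = H"
proof (intro ext)
  fix x y
  have finite: "finite V" and symG: "\<And>u v. G v u = G u v" and symH: "\<And>u v. H v u = H u v"
    using assms(1,2) unfolding is_graph_def by auto
  have same_nonsingular: "rows_indep G W W \<longleftrightarrow> rows_indep H W W" if "W \<subseteq> V" for W
    using assms(3) that unfolding pivotal_poset_nonsingular[OF finite] by blast
  show "G x y = H x y"
  proof (cases "x \<in> V \<and> y \<in> V")
    case False
    then show ?thesis using assms(1,2) unfolding is_graph_def by auto
  next
    case True
    have loops: "G x x = H x x" "G y y = H y y"
      using same_nonsingular[of "{x}"] same_nonsingular[of "{y}"] True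
      by (simp_all add: rows_indep_singleton)
    show ?thesis
    proof (cases "x = y")
      case True
      then show ?thesis using loops by simp
    next
      case False
      then have "(G x y \<noteq> (G x x \<and> G y y)) \<longleftrightarrow> (H x y \<noteq> (H x x \<and> H y y))"
        using same_nonsingular[of "{x, y}"] \<open>x \<in> V \<and> y \<in> V\<close>
        by (simp add: rows_indep_pair symG symH)
      then show ?thesis using loops by auto
    qed
  qed
qed

end
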